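(* Let $n\geq 2$ be an integer and let $L_n$ be the $n$-element MV-chain. Then the number of $(\odot,\vee)$-derivations on $L_n$ is exactly $$|\operatorname{Der}(L_n)|=\frac{(n-1)(n+2)}{2}.$$
   Context: An MV-algebra is an algebra $(A,\oplus,{}^*,0)$ of type $(2,1,0)$ satisfying: $x\oplus(y\oplus z)=(x\oplus y)\oplus z$, $x\oplus y=y\oplus x$, $x\oplus 0=x$, $x^{**}=x$, $x\oplus 0^*=0^*$, $(x^*\oplus y)^*\oplus y=(y^*\oplus x)^*\oplus x$. Put $1=0^*$ and $x\odot y=(x^*\oplus y^* )^*$. The natural order is $x\le y$ iff $x^*\oplus y=1$; it makes $A$ a bounded distributive lattice with $x\vee y=(x\odot y^* )\oplus y$ and $x\wedge y=x\odot(x^*\oplus y)$. A $(\odot,\vee)$-derivation on an MV-algebra $A$ is a map $d:A\to A$ with $d(x\odot y)=(d(x)\odot y)\vee(x\odot d(y))$ for all $x,y\in A$; $\operatorname{Der}(A)$ denotes the set of all of them. $L_n=\{0,\frac1{n-1},\dots,\frac{n-2}{n-1},1\}\subseteq[0,1]$ with $x\oplus y=\min\{1,x+y\}$ and $x^*=1-x$ (so $x\odot y=\max\{0,x+y-1\}$). *)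

theory Defs
  imports Complex_Main "HOL-Library.FuncSet"
begin

definition Ln :: "nat \<Rightarrow> real set" where
  "Ln n = {real k / real (n - 1) | k. k \<le> n - 1}"

definition mv_oplus :: "real \<Rightarrow> real \<Rightarrow> real" where
  "mv_oplus x y = min 1 (x + y)"

definition mv_neg :: "real \<Rightarrow> real" where
  "mv_neg x = 1 - x"

definition mv_odot :: "real \<Rightarrow> real \<Rightarrow> real" where
  "mv_odot x y = mv_neg (mv_oplus (mv_neg x) (mv_neg y))"

definition mv_join :: "real \<Rightarrow> real \<Rightarrow> real" where
  "mv_join x y = mv_oplus (mv_odot x (mv_neg y)) y"

text \<open>(\<odot>,\<or>)-derivations on L_n: maps L_n \<rightarrow> L_n (extensional, i.e. undefined
  outside L_n, so that they correspond bijectively to maps on the carrier).\<close>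
definition Der_Ln :: "nat \<Rightarrow> (real \<Rightarrow> real) set" where
  "Der_Ln n = {d \<in> Ln n \<rightarrow>\<^sub>E Ln n.
     \<forall>x \<in> Ln n. \<forall>y \<in> Ln n.
       d (mv_odot x y) = mv_join (mv_odot (d x) y) (mv_odot x (d y))}"

end

theory Submission imports Defs begin

text \<open>Write $M = n - 1$ and identify $L_n$ with $\{0,\dots,M\}$ via $i \mapsto i/M$. Then
  $x \odot y$ becomes $i + k \mathbin{\dot-} M$ and $\vee$ becomes $\max$, so a derivation is a map
  $g$ on $\{0,\dots,M\}$ with $g(i + k \mathbin{\dot-} M) = \max(g\,i + k \mathbin{\dot-} M,\ i + g\,k \mathbin{\dot-} M)$.
  Taking $k = M - 1$ and descending from $i = M - 1$ shows $g\,i = i + j \mathbin{\dot-} M$ for all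
  $i < M$, where $j = g(M-1) + 1 \ge 1$, while $k = M-1$, $i = M$ forces $g\,M \le j$. Conversely
  every such pair $(j, t)$ with $1 \le j \le M$, $t \le j$ gives a derivation, i.e.
  $d(x) = x \odot \frac{j}{M}$ for $x < 1$ and $d(1) = \frac{t}{M}$. Hence
  $|\mathrm{Der}(L_n)| = \sum_{j=1}^{M} (j+1) = \frac{M(M+3)}{2}$.\<close>

definition grid :: "nat \<Rightarrow> nat \<Rightarrow> real" where
  "grid M i = real i / real M"

lemma Ln_Suc_eq_grid_image: "Ln (Suc M) = grid M ` {..M}"
  unfolding Ln_def grid_def by auto

lemma grid_eq_grid_iff: "M > 0 \<Longrightarrow> grid M a = grid M b \<longleftrightarrow> a = b"
  unfolding grid_def by (simp add: divide_cancel_right)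

lemma grid_le_grid_iff: "M > 0 \<Longrightarrow> grid M a \<le> grid M b \<longleftrightarrow> a \<le> b"
  unfolding grid_def by (simp add: divide_le_cancel)

lemma grid_self: "M > 0 \<Longrightarrow> grid M M = 1"
  unfolding grid_def by simp

lemma mv_odot_eq_max: "mv_odot x y = max 0 (x + y - 1)"
  unfolding mv_odot_def mv_oplus_def mv_neg_def by (simp add: min_def max_def)

lemma mv_join_eq_max:
  assumes "0 \<le> x" "x \<le> 1" "0 \<le> y" "y \<le> 1"
  shows "mv_join x y = max x y"
  unfolding mv_join_def mv_odot_def mv_oplus_def mv_neg_def using assms
  by (simp add: min_def max_def)

lemma mv_odot_grid:
  assumes M: "M > 0"
  shows "mv_odot (grid M a) (grid M b) = grid M (a + b - M)"
proof (cases "M \<le> a + b")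
  case True
  then show ?thesis
    unfolding mv_odot_eq_max grid_def using M by (simp add: of_nat_diff field_simps)
next
  case False
  then have "real a / real M + real b / real M - 1 \<le> 0"
    using M by (simp add: field_simps)
  then show ?thesis
    unfolding mv_odot_eq_max grid_def using False by simp
qed

lemma mv_join_grid:
  assumes M: "M > 0" and "a \<le> M" "b \<le> M"
  shows "mv_join (grid M a) (grid M b) = grid M (max a b)"
proof -
  have "0 \<le> grid M c \<and> grid M c \<le> 1" if "c \<le> M" for c
    using that M unfolding grid_def by simp
  then have "mv_join (grid M a) (grid M b) = max (grid M a) (grid M b)"
    using assms by (simp add: mv_join_eq_max)
  also have "\<dots> = grid M (max a b)"
    using grid_le_grid_iff[OF M] by (auto simp: max_def)
  finally show ?thesis .
qed

definition der_identity :: "nat \<Rightarrow> (nat \<Rightarrow> nat) \<Rightarrow> bool" where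
  "der_identity M g \<longleftrightarrow> (\<forall>i\<le>M. \<forall>k\<le>M. g (i + k - M) = max (g i + k - M) (i + g k - M))"

lemma derivation_law_iff_der_identity:
  assumes M: "M > 0" and g: "\<And>i. i \<le> M \<Longrightarrow> g i \<le> M \<and> d (grid M i) = grid M (g i)"
  shows "(\<forall>x \<in> Ln (Suc M). \<forall>y \<in> Ln (Suc M).
           d (mv_odot x y) = mv_join (mv_odot (d x) y) (mv_odot x (d y)))
         \<longleftrightarrow> der_identity M g"
proof -
  have "d (mv_odot (grid M i) (grid M k))
          = mv_join (mv_odot (d (grid M i)) (grid M k)) (mv_odot (grid M i) (d (grid M k)))
        \<longleftrightarrow> g (i + k - M) = max (g i + k - M) (i + g k - M)"
    if ik: "i \<le> M" "k \<le> M" for i k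
  proof -
    have "g i + k - M \<le> M" "i + g k - M \<le> M" "i + k - M \<le> M"
      using g[OF ik(1)] g[OF ik(2)] ik by auto
    then show ?thesis
      using g ik by (simp add: mv_odot_grid[OF M] mv_join_grid[OF M] grid_eq_grid_iff[OF M])
  qed
  then show ?thesis
    unfolding der_identity_def Ln_Suc_eq_grid_image by auto
qed

definition affine_der :: "nat \<Rightarrow> nat \<Rightarrow> nat \<Rightarrow> nat \<Rightarrow> nat" where
  "affine_der M j t i = (if i = M then t else i + j - M)"

lemma der_identity_affine_der:
  assumes "1 \<le> j" "j \<le> M" "t \<le> j"
  shows "der_identity M (affine_der M j t)"
  using assms unfolding der_identity_def affine_der_def by (auto simp: max_def)

lemma der_identity_imp_affine_der:
  assumes M: "M > 0" and range: "\<And>i. i \<le> M \<Longrightarrow> g i \<le> M" and id: "der_identity M g"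
  obtains j t where "1 \<le> j" "j \<le> M" "t \<le> j" "\<And>i. i \<le> M \<Longrightarrow> g i = affine_der M j t i"
proof -
  define j where "j = g (M - 1) + 1"
  have descend: "g i = max (g (Suc i) - 1) (Suc i + g (M - 1) - M)" if "i < M" for i
  proof -
    have "g (Suc i + (M - 1) - M) = max (g (Suc i) + (M - 1) - M) (Suc i + g (M - 1) - M)"
      using id that unfolding der_identity_def by (simp only: Suc_le_eq diff_le_self)
    moreover have "Suc i + (M - 1) - M = i" "g (Suc i) + (M - 1) - M = g (Suc i) - 1"
      using that by auto
    ultimately show ?thesis by simp
  qed
  have below: "g i = i + j - M" if "i \<le> M - 1" for i
    using that
  proof (induction rule: inc_induct)
    case base
    show ?case unfolding j_def using M by simp
  next
    case (step i)
    then show ?case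
      using descend[of i] unfolding j_def by (simp add: max_def)
  qed
  have "g 0 = 0"
    using id[unfolded der_identity_def, rule_format, of 0 0] range[of 0] by simp
  then have j_le: "j \<le> M"
    using below[of 0] by simp
  have "g (M - 1) = max (g M - 1) (M + g (M - 1) - M)"
    using descend[of "M - 1"] M by simp
  then have gM_le: "g M \<le> j"
    unfolding j_def by linarith
  have "g i = affine_der M j (g M) i" if "i \<le> M" for i
  proof (cases "i = M")
    case False
    then show ?thesis using below[of i] that unfolding affine_der_def by simp
  qed (simp add: affine_der_def)
  moreover have "1 \<le> j"
    unfolding j_def by simp
  ultimately show ?thesis
    using that j_le gM_le by blast
qed

definition odot_der :: "nat \<Rightarrow> nat \<Rightarrow> nat \<Rightarrow> real \<Rightarrow> real" where
  "odot_der M j t = restrict (\<lambda>x. if x = 1 then grid M t else mv_odot x (grid M j)) (Ln (Suc M))"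

lemma odot_der_grid:
  assumes "M > 0" "i \<le> M"
  shows "odot_der M j t (grid M i) = grid M (affine_der M j t i)"
  using assms grid_eq_grid_iff[of M i M] grid_self[of M]
  unfolding odot_der_def affine_der_def Ln_Suc_eq_grid_image by (auto simp: mv_odot_grid)

lemma odot_der_mem_Der_Ln:
  assumes M: "M > 0" and j: "1 \<le> j" "j \<le> M" "t \<le> j"
  shows "odot_der M j t \<in> Der_Ln (Suc M)"
proof -
  have range: "affine_der M j t i \<le> M" if "i \<le> M" for i
    using j that unfolding affine_der_def by auto
  have "odot_der M j t \<in> Ln (Suc M) \<rightarrow>\<^sub>E Ln (Suc M)"
    using range
    by (auto simp: Ln_Suc_eq_grid_image odot_der_grid[OF M])
      (simp add: odot_der_def Ln_Suc_eq_grid_image)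
  moreover have "\<forall>x \<in> Ln (Suc M). \<forall>y \<in> Ln (Suc M). odot_der M j t (mv_odot x y)
      = mv_join (mv_odot (odot_der M j t x) y) (mv_odot x (odot_der M j t y))"
    using derivation_law_iff_der_identity[OF M, of "affine_der M j t" "odot_der M j t"]
      range odot_der_grid[OF M] der_identity_affine_der[OF j] by blast
  ultimately show ?thesis
    unfolding Der_Ln_def by blast
qed

lemma Der_Ln_elem_eq_odot_der:
  assumes M: "M > 0" and d: "d \<in> Der_Ln (Suc M)"
  obtains j t where "1 \<le> j" "j \<le> M" "t \<le> j" "d = odot_der M j t"
proof -
  have d_fun: "d \<in> Ln (Suc M) \<rightarrow>\<^sub>E Ln (Suc M)"
    and law: "\<forall>x \<in> Ln (Suc M). \<forall>y \<in> Ln (Suc M).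
      d (mv_odot x y) = mv_join (mv_odot (d x) y) (mv_odot x (d y))"
    using d unfolding Der_Ln_def by auto
  have "\<forall>i. \<exists>k. i \<le> M \<longrightarrow> k \<le> M \<and> d (grid M i) = grid M k"
    using d_fun by (fastforce simp: Ln_Suc_eq_grid_image)
  then obtain g where g: "\<And>i. i \<le> M \<Longrightarrow> g i \<le> M \<and> d (grid M i) = grid M (g i)"
    by metis
  then have "der_identity M g"
    using law derivation_law_iff_der_identity[OF M] by blast
  then obtain j t where jt: "1 \<le> j" "j \<le> M" "t \<le> j"
    and g_eq: "\<And>i. i \<le> M \<Longrightarrow> g i = affine_der M j t i"
    using der_identity_imp_affine_der[OF M] g by blast
  have "odot_der M j t \<in> Ln (Suc M) \<rightarrow>\<^sub>E Ln (Suc M)"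
    using odot_der_mem_Der_Ln[OF M jt] unfolding Der_Ln_def by blast
  then have "d = odot_der M j t"
    by (rule PiE_ext[OF d_fun]) (auto simp: Ln_Suc_eq_grid_image g g_eq odot_der_grid[OF M])
  with jt that show ?thesis by blast
qed

lemma odot_der_eq_odot_der_iff:
  assumes M: "M > 0" and j: "1 \<le> j" "1 \<le> j'"
  shows "odot_der M j t = odot_der M j' t' \<longleftrightarrow> j = j' \<and> t = t'"
proof
  assume eq: "odot_der M j t = odot_der M j' t'"
  have at_pred: "affine_der M i s (M - 1) = i - 1" for i s
    using M unfolding affine_der_def by auto
  have "grid M t = grid M t'"
    using fun_cong[OF eq, of "grid M M"] odot_der_grid[OF M] by (simp add: affine_der_def)
  moreover have "grid M (j - 1) = grid M (j' - 1)"
    using fun_cong[OF eq, of "grid M (M - 1)"] odot_der_grid[OF M, of "M - 1"] at_pred by simp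
  ultimately show "j = j' \<and> t = t'"
    using j unfolding grid_eq_grid_iff[OF M] by simp
qed simp

lemma Der_Ln_Suc_eq_image:
  assumes M: "M > 0"
  shows "Der_Ln (Suc M) = (\<lambda>(j, t). odot_der M j t) ` (SIGMA j:{1..M}. {..j})"
proof (intro equalityI subsetI)
  fix d
  assume "d \<in> Der_Ln (Suc M)"
  then obtain j t where "1 \<le> j" "j \<le> M" "t \<le> j" "d = odot_der M j t"
    using Der_Ln_elem_eq_odot_der[OF M] by blast
  then show "d \<in> (\<lambda>(j, t). odot_der M j t) ` (SIGMA j:{1..M}. {..j})"
    by force
qed (auto intro: odot_der_mem_Der_Ln[OF M])

lemma card_Sigma_atLeastAtMost_atMost: "card (SIGMA j:{1..M}. {..j}) = M * (M + 3) div 2"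
proof -
  have "2 * (\<Sum>j=1..M. Suc j) = M * (M + 3)"
    by (induction M) (auto simp: algebra_simps)
  then show ?thesis
    by simp
qed

theorem theorem3p11:
  fixes n :: nat
  assumes "n \<ge> 2"
  shows "card (Der_Ln n) = (n - 1) * (n + 2) div 2"
proof -
  define M where "M = n - 1"
  have n: "n = Suc M" and M: "M > 0"
    using assms unfolding M_def by auto
  let ?params = "SIGMA j:{1..M}. {..j}"
  have "Der_Ln n = (\<lambda>(j, t). odot_der M j t) ` ?params"
    unfolding n by (rule Der_Ln_Suc_eq_image[OF M])
  moreover have "inj_on (\<lambda>(j, t). odot_der M j t) ?params"
    by (rule inj_onI) (auto simp: odot_der_eq_odot_der_iff[OF M])
  ultimately have "card (Der_Ln n) = card ?params"
    by (simp add: card_image)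
  also have "\<dots> = M * (M + 3) div 2"
    by (rule card_Sigma_atLeastAtMost_atMost)
  also have "M * (M + 3) = (n - 1) * (n + 2)"
    unfolding n by (simp add: algebra_simps)
  finally show ?thesis .
qed

end
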